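(* Let $\Sigma$ be a finitary signature, $X$ a set, and fix $p\in X\cup\Sigma_0$. Consider the set $\Psi_\Sigma X$ of all $\Sigma$-trees over $X$, ordered by cutting. Then every strictly increasing sequence $s_0<s_1<s_2<\cdots$ in $\Psi_\Sigma X$ consists of finite trees (i.e. lies in $\Phi_\Sigma X$), and it has exactly one upper bound in $\Psi_\Sigma X$.
   Context: A finitary signature is a sequence $\Sigma=(\Sigma_n)_{n\in\mathbb N}$ of sets ($\Sigma_n$ = $n$-ary operation symbols). A $\Sigma$-tree is an ordered (planar) rooted tree, finite or infinite, whose nodes are labelled in $\bigcup_n\Sigma_n$ such that a node labelled by $\sigma\in\Sigma_n$ has exactly $n$ children; trees are considered up to isomorphism. For a set $X$, a $\Sigma$-tree over $X$ is a $(\Sigma+X)$-tree where the elements of $X$ are added as nullary symbols. $\Psi_\Sigma X$ is the set of all $\Sigma$-trees over $X$ and $\Phi_\Sigma X\subseteq\Psi_\Sigma X$ the set of finite ones. For a tree $t$ and $n\in\mathbb N$, the cutting $\partial_n t$ is the tree obtained from $t$ by deleting all nodes of height $>n$ and relabelling all remaining nodes of height $n$ (which are now leaves) by $p$ (the root has height $0$). The order by cutting on $\Psi_\Sigma X$: $s\le s'$ iff $s=s'$ or $s=\partial_n s'$ for some $n\in\mathbb N$. *)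

theory Defs
  imports Main
begin

text \<open>A finitary signature is \<open>Sig :: nat \<Rightarrow> 's set\<close> (\<open>Sig n\<close> = n-ary symbols).
Node labels of trees over X: \<open>Inl (n, \<sigma>)\<close> for \<open>\<sigma> \<in> Sig n\<close> (the arity is recorded,
so the Sig n are treated as disjoint), or \<open>Inr x\<close> for a variable \<open>x \<in> X\<close>.
A (possibly infinite) ordered tree is represented canonically (i.e. up to isomorphism)
as a partial map from positions (lists of child indices) to labels.\<close>

type_synonym ('s, 'x) lab = "(nat \<times> 's) + 'x"
type_synonym ('s, 'x) tree = "nat list \<Rightarrow> ('s, 'x) lab option"

definition is_label :: "(nat \<Rightarrow> 's set) \<Rightarrow> 'x set \<Rightarrow> ('s, 'x) lab \<Rightarrow> bool" where
  "is_label Sig X l \<longleftrightarrow> (case l of Inl (n, \<sigma>) \<Rightarrow> \<sigma> \<in> Sig n | Inr x \<Rightarrow> x \<in> X)"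

definition arity :: "('s, 'x) lab \<Rightarrow> nat" where
  "arity l = (case l of Inl (n, _) \<Rightarrow> n | Inr _ \<Rightarrow> 0)"

definition Psi :: "(nat \<Rightarrow> 's set) \<Rightarrow> 'x set \<Rightarrow> ('s, 'x) tree set" where
  "Psi Sig X = {t. t [] \<noteq> None
     \<and> (\<forall>w i. t (w @ [i]) \<noteq> None \<longrightarrow> t w \<noteq> None)
     \<and> (\<forall>w l. t w = Some l \<longrightarrow> is_label Sig X l \<and> (\<forall>i. t (w @ [i]) \<noteq> None \<longleftrightarrow> i < arity l))}"

definition finite_tree :: "('s, 'x) tree \<Rightarrow> bool" where
  "finite_tree t \<longleftrightarrow> finite {w. t w \<noteq> None}"

definition Phi :: "(nat \<Rightarrow> 's set) \<Rightarrow> 'x set \<Rightarrow> ('s, 'x) tree set" where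
  "Phi Sig X = {t \<in> Psi Sig X. finite_tree t}"

text \<open>Cutting at height n (the height of a node is the length of its position),
relabelling the new leaves at height n by p.\<close>
definition cut :: "('s, 'x) lab \<Rightarrow> nat \<Rightarrow> ('s, 'x) tree \<Rightarrow> ('s, 'x) tree" where
  "cut p n t = (\<lambda>w. if length w < n then t w
                    else if length w = n then (if t w = None then None else Some p)
                    else None)"

definition cut_le :: "('s, 'x) lab \<Rightarrow> ('s, 'x) tree \<Rightarrow> ('s, 'x) tree \<Rightarrow> bool" where
  "cut_le p s s' \<longleftrightarrow> s = s' \<or> (\<exists>n. s = cut p n s')"

definition cut_less :: "('s, 'x) lab \<Rightarrow> ('s, 'x) tree \<Rightarrow> ('s, 'x) tree \<Rightarrow> bool" where
  "cut_less p s s' \<longleftrightarrow> cut_le p s s' \<and> s \<noteq> s'"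

end

theory Submission
  imports Defs
begin

text \<open>Consecutive members of a strictly increasing chain are cuts of each other at strictly
increasing heights \<open>n i \<ge> i\<close>, so below height \<open>i\<close> the chain is constant from \<open>s i\<close> on. The
diagonal \<open>u w = s (Suc (length w)) w\<close> is therefore a tree whose cuts are the \<open>s i\<close>. Any upper
bound \<open>v\<close> agrees with \<open>u\<close> at every node \<open>w\<close>: for \<open>i = Suc (length w)\<close>, if \<open>s (Suc i)\<close> were a cut
of \<open>v\<close> at a height \<open>\<le> length w\<close>, so would be \<open>s i\<close>, at the same height, and the two would coincide.
Each \<open>s i\<close> is a cut of a finitely branching tree, hence finite.\<close>

lemma cut_cut: "cut p a (cut p b t) = cut p (min a b) t"
  by (rule ext) (auto simp: cut_def)

lemma cut_eq_below: "length w < n \<Longrightarrow> cut p n t w = t w"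
  by (simp add: cut_def)

lemma Psi_nodes_bounded_finite:
  assumes t: "t \<in> Psi Sig X"
  shows "finite {w. t w \<noteq> None \<and> length w \<le> k}"
proof (induction k)
  case 0
  have "{w. t w \<noteq> None \<and> length w \<le> 0} \<subseteq> {[]}" by auto
  then show ?case by (rule finite_subset) simp
next
  case (Suc k)
  let ?L = "{w. t w \<noteq> None \<and> length w \<le> k}"
  have "{w. t w \<noteq> None \<and> length w \<le> Suc k} \<subseteq>
        ?L \<union> (\<Union>w\<in>?L. (\<lambda>i. w @ [i]) ` {..<arity (the (t w))})"
  proof
    fix v assume v: "v \<in> {w. t w \<noteq> None \<and> length w \<le> Suc k}"
    show "v \<in> ?L \<union> (\<Union>w\<in>?L. (\<lambda>i. w @ [i]) ` {..<arity (the (t w))})"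
    proof (cases "length v \<le> k")
      case False
      with v obtain w i where vw: "v = w @ [i]" and lw: "length w = k"
        by (metis (mono_tags, lifting) le_SucE length_Suc_conv_rev mem_Collect_eq)
      from v vw have tv: "t (w @ [i]) \<noteq> None" by simp
      with t obtain l where l: "t w = Some l" unfolding Psi_def by blast
      with t tv have "i < arity l" unfolding Psi_def by blast
      with l lw vw show ?thesis by auto
    qed (use v in simp)
  qed
  moreover have "finite (?L \<union> (\<Union>w\<in>?L. (\<lambda>i. w @ [i]) ` {..<arity (the (t w))}))"
    using Suc.IH by auto
  ultimately show ?case by (rule finite_subset)
qed

lemma finite_tree_cut:
  assumes "t \<in> Psi Sig X"
  shows "finite_tree (cut p n t)"
proof -
  have "{w. cut p n t w \<noteq> None} \<subseteq> {w. t w \<noteq> None \<and> length w \<le> n}"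
    by (auto simp: cut_def split: if_splits)
  then show ?thesis
    unfolding finite_tree_def using Psi_nodes_bounded_finite[OF assms] by (rule finite_subset)
qed

lemma Psi_if_locally_Psi:
  assumes "\<And>w. \<exists>t\<in>Psi Sig X. t w = u w \<and> (\<forall>i. t (w @ [i]) = u (w @ [i]))"
  shows "u \<in> Psi Sig X"
  using assms unfolding Psi_def by (smt (verit) mem_Collect_eq)

locale cut_chain =
  fixes p :: "('s, 'x) lab" and s :: "nat \<Rightarrow> ('s, 'x) tree" and n :: "nat \<Rightarrow> nat"
  assumes cut_step: "s i = cut p (n i) (s (Suc i))"
    and heights_strict_mono: "strict_mono n"
    and step_neq: "s i \<noteq> s (Suc i)"
begin

lemma cut_later: "i \<le> j \<Longrightarrow> s i = cut p (n i) (s j)"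
proof (induction j rule: dec_induct)
  case base
  show ?case using cut_step[of i] by (metis cut_cut min.idem)
next
  case (step j)
  have "n i \<le> n j" using step.hyps heights_strict_mono by (simp add: strict_mono_less_eq)
  with step.IH show ?case using cut_step[of j] by (simp add: cut_cut min_absorb1)
qed

lemma below_height_constant:
  assumes "length w < i" and "i \<le> j"
  shows "s j w = s i w"
proof -
  have "length w < n i"
    using assms(1) strict_mono_imp_increasing[OF heights_strict_mono, of i] by simp
  then show ?thesis using cut_later[OF assms(2)] by (simp add: cut_eq_below)
qed

definition limit :: "('s, 'x) tree" where
  "limit w = s (Suc (length w)) w"

lemma limit_eq: "length w < j \<Longrightarrow> s j w = limit w"
  unfolding limit_def by (rule below_height_constant) auto

lemma limit_in_Psi:
  assumes "\<And>i. s i \<in> Psi Sig X"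
  shows "limit \<in> Psi Sig X"
proof (rule Psi_if_locally_Psi)
  fix w :: "nat list"
  show "\<exists>t\<in>Psi Sig X. t w = limit w \<and> (\<forall>i. t (w @ [i]) = limit (w @ [i]))"
    by (rule bexI[of _ "s (Suc (Suc (length w)))"]) (auto simp: limit_eq assms)
qed

lemma cut_limit: "s i = cut p (n i) limit"
proof (rule ext)
  fix w :: "nat list"
  let ?j = "max i (Suc (length w))"
  have "s i w = cut p (n i) (s ?j) w" using cut_later[of i ?j] by simp
  also have "\<dots> = cut p (n i) limit w"
  proof -
    have "s ?j w = limit w" by (rule limit_eq) simp
    then show ?thesis unfolding cut_def by presburger
  qed
  finally show "s i w = cut p (n i) limit w" .
qed

lemma cut_le_upper_bound_eq_limit:
  assumes "\<forall>i. cut_le p (s i) v"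
  shows "v = limit"
proof (rule ext)
  fix w :: "nat list"
  let ?i = "Suc (length w)"
  have "length w < n ?i"
    using strict_mono_imp_increasing[OF heights_strict_mono, of ?i] by simp
  have si: "s ?i = cut p (n ?i) (s (Suc ?i))" by (rule cut_step)
  from assms consider "s (Suc ?i) = v" | m where "s (Suc ?i) = cut p m v"
    unfolding cut_le_def by blast
  then have "s ?i w = v w"
  proof cases
    case 1
    with si \<open>length w < n ?i\<close> show ?thesis by (simp add: cut_eq_below)
  next
    case (2 m)
    have "length w < m"
    proof (rule ccontr)
      assume "\<not> length w < m"
      with \<open>length w < n ?i\<close> have "s ?i = s (Suc ?i)" using si 2 by (simp add: cut_cut)
      with step_neq show False by blast
    qed
    with si 2 \<open>length w < n ?i\<close> show ?thesis by (simp add: cut_cut cut_eq_below)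
  qed
  then show "v w = limit w" by (simp add: limit_eq)
qed

end

lemma cut_chain_if_cut_less_chain:
  assumes "\<And>i j. i < j \<Longrightarrow> cut_less p (s i) (s j)"
  obtains n where "cut_chain p s n"
proof -
  have "\<forall>i. \<exists>m. s i = cut p m (s (Suc i))"
    using assms unfolding cut_less_def cut_le_def by blast
  then obtain n where n: "\<And>i. s i = cut p (n i) (s (Suc i))" by metis
  have neq: "s i \<noteq> s (Suc i)" for i using assms[of i "Suc i"] by (simp add: cut_less_def)
  have "n i < n (Suc i)" for i
  proof (rule ccontr)
    assume "\<not> n i < n (Suc i)"
    then have "s i = s (Suc i)"
      using n[of i] n[of "Suc i"] by (simp add: cut_cut min_absorb2)
    with neq show False by blast
  qed
  then have "strict_mono n" by (rule strict_mono_Suc_iff[THEN iffD2, rule_format])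
  with n neq show thesis by (intro that) (unfold_locales)
qed

theorem mainTheorem1:
  fixes Sig :: "nat \<Rightarrow> 's set" and X :: "'x set" and p :: "('s, 'x) lab"
    and s :: "nat \<Rightarrow> ('s, 'x) tree"
  assumes p: "(\<exists>x\<in>X. p = Inr x) \<or> (\<exists>\<sigma>\<in>Sig 0. p = Inl (0, \<sigma>))"
    and inPsi: "\<And>i. s i \<in> Psi Sig X"
    and incr: "\<And>i j. i < j \<Longrightarrow> cut_less p (s i) (s j)"
  shows "(\<forall>i. s i \<in> Phi Sig X) \<and> (\<exists>!u. u \<in> Psi Sig X \<and> (\<forall>i. cut_le p (s i) u))"
proof -
  obtain n where chain: "cut_chain p s n" using incr by (rule cut_chain_if_cut_less_chain)
  have "finite_tree (s i)" for i
    using finite_tree_cut[OF inPsi[of "Suc i"]] cut_chain.cut_step[OF chain, of i] by simp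
  then have "\<forall>i. s i \<in> Phi Sig X" using inPsi by (simp add: Phi_def)
  moreover have "\<forall>i. cut_le p (s i) (cut_chain.limit s)"
    using cut_chain.cut_limit[OF chain] unfolding cut_le_def by blast
  ultimately show ?thesis
    using cut_chain.limit_in_Psi[OF chain inPsi] cut_chain.cut_le_upper_bound_eq_limit[OF chain] by blast
qed

end
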